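(* Let $M$ be either the interval $[0,1]$ or the unit circle $S^1$, and let $f:M\to M$ be continuous. Then every wandering interval $J$ of $f$ satisfies $\mu(J)=0$ for every Borel probability measure $\mu$ that is an expansive measure of $f$.
   Context: $M$ carries its usual metric $d$. A wandering interval of $f$ is an interval $J\subset M$ such that $f^n(J)\cap f^m(J)=\emptyset$ for all distinct $n,m\in\{0,1,2,\dots\}$ and no point of $J$ belongs to the stable set $W^s(p)=\{x:\lim_{n\to\infty}d(f^n(x),f^n(p))=0\}$ of a periodic point $p$. A Borel probability measure $\mu$ is an expansive measure of $f$ if there is $\delta>0$ with $\mu(\Phi_\delta(x))=0$ for all $x\in M$, where $\Phi_\delta(x)=\{y\in M: d(f^i(y),f^i(x))\le\delta \ \forall i\in\{0,1,2,\dots\}\}$. *)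

theory Defs
  imports "HOL-Probability.Probability"
begin

definition periodic_point :: "'a set \<Rightarrow> ('a \<Rightarrow> 'a) \<Rightarrow> 'a \<Rightarrow> bool" where
  "periodic_point M f p \<longleftrightarrow> p \<in> M \<and> (\<exists>n>0. (f ^^ n) p = p)"

definition stable_set :: "'a set \<Rightarrow> ('a \<Rightarrow> 'a::metric_space) \<Rightarrow> 'a \<Rightarrow> 'a set" where
  "stable_set M f p = {x \<in> M. (\<lambda>n. dist ((f ^^ n) x) ((f ^^ n) p)) \<longlonglongrightarrow> 0}"

text \<open>An interval of M: a connected subset of M with more than one point
  (for M = [0,1] these are the nondegenerate intervals, for M = S^1 the nondegenerate arcs).\<close>
definition is_interval_in :: "'a set \<Rightarrow> 'a::topological_space set \<Rightarrow> bool" where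
  "is_interval_in M J \<longleftrightarrow> J \<subseteq> M \<and> connected J \<and> (\<exists>x\<in>J. \<exists>y\<in>J. x \<noteq> y)"

definition wandering_interval :: "'a set \<Rightarrow> ('a \<Rightarrow> 'a::metric_space) \<Rightarrow> 'a set \<Rightarrow> bool" where
  "wandering_interval M f J \<longleftrightarrow>
     is_interval_in M J \<and>
     (\<forall>n m::nat. n \<noteq> m \<longrightarrow> (f ^^ n) ` J \<inter> (f ^^ m) ` J = {}) \<and>
     (\<forall>p. periodic_point M f p \<longrightarrow> J \<inter> stable_set M f p = {})"

definition dyn_ball :: "'a set \<Rightarrow> ('a \<Rightarrow> 'a::metric_space) \<Rightarrow> real \<Rightarrow> 'a \<Rightarrow> 'a set" where
  "dyn_ball M f \<delta> x = {y \<in> M. \<forall>i::nat. dist ((f ^^ i) y) ((f ^^ i) x) \<le> \<delta>}"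

definition borel_prob_on :: "'a::topological_space set \<Rightarrow> 'a measure \<Rightarrow> bool" where
  "borel_prob_on M \<mu> \<longleftrightarrow> prob_space \<mu> \<and> sets \<mu> = sets (restrict_space borel M)"

definition expansive_measure :: "'a set \<Rightarrow> ('a \<Rightarrow> 'a::metric_space) \<Rightarrow> 'a measure \<Rightarrow> bool" where
  "expansive_measure M f \<mu> \<longleftrightarrow> (\<exists>\<delta>>0. \<forall>x\<in>M. emeasure \<mu> (dyn_ball M f \<delta> x) = 0)"

end

theory Submission
  imports Defs
begin

text \<open>Let \<open>\<delta>\<close> be an expansivity constant. In \<open>[0,1]\<close> and in \<open>S\<^sup>1\<close> some finite set
  meets every connected set of diameter greater than \<open>\<delta>\<close>. The iterates \<open>f\<^sup>n(J)\<close> are pairwise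
  disjoint connected sets, so each point of that finite set lies in at most one of them, and hence
  all but finitely many of them have diameter at most \<open>\<delta>\<close>. Uniform continuity of the remaining
  finitely many iterates then covers \<open>J\<close> by finitely many dynamical balls \<open>\<Phi>\<^sub>\<delta>(x)\<close>, all of
  measure zero.\<close>

lemma funpow_image_subset:
  assumes "f ` M \<subseteq> M"
  shows "(f ^^ n) ` M \<subseteq> M"
  by (induction n) (use assms in auto)

lemma continuous_on_funpow:
  assumes "continuous_on M f" and "f ` M \<subseteq> M"
  shows "continuous_on M (f ^^ n)"
proof (induction n)
  case (Suc n)
  show ?case
    unfolding funpow.simps comp_def
    by (rule continuous_on_compose2[OF assms(1) Suc funpow_image_subset[OF assms(2)]])
qed simp

lemma funpow_uniformly_close:
  fixes f :: "'a::metric_space \<Rightarrow> 'a"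
  assumes "compact M" and "continuous_on M f" and "f ` M \<subseteq> M" and "\<delta> > 0"
  shows "\<exists>\<epsilon>>0. \<forall>i<N. \<forall>y\<in>M. \<forall>z\<in>M. dist y z < \<epsilon> \<longrightarrow> dist ((f ^^ i) y) ((f ^^ i) z) \<le> \<delta>"
proof (induction N)
  case 0
  show ?case by (rule exI[of _ 1]) auto
next
  case (Suc N)
  then obtain \<epsilon> where \<epsilon>: "\<epsilon> > 0"
    "\<forall>i<N. \<forall>y\<in>M. \<forall>z\<in>M. dist y z < \<epsilon> \<longrightarrow> dist ((f ^^ i) y) ((f ^^ i) z) \<le> \<delta>"
    by blast
  have "uniformly_continuous_on M (f ^^ N)"
    using assms by (intro compact_uniformly_continuous continuous_on_funpow)
  then obtain d where d: "d > 0"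
    "\<forall>y\<in>M. \<forall>z\<in>M. dist y z < d \<longrightarrow> dist ((f ^^ N) y) ((f ^^ N) z) < \<delta>"
    unfolding uniformly_continuous_on_def using \<open>\<delta> > 0\<close> by blast
  show ?case
  proof (rule exI[of _ "min \<epsilon> d"], intro conjI allI impI ballI)
    fix i y z
    assume "i < Suc N" "y \<in> M" "z \<in> M" "dist y z < min \<epsilon> d"
    then show "dist ((f ^^ i) y) ((f ^^ i) z) \<le> \<delta>"
      using \<epsilon> d by (cases "i = N") (auto intro: less_imp_le)
  qed (use \<epsilon> d in simp)
qed

lemma closed_dyn_ball:
  fixes f :: "'a::metric_space \<Rightarrow> 'a"
  assumes "closed M" and "continuous_on M f" and "f ` M \<subseteq> M"
  shows "closed (dyn_ball M f \<delta> x)"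
proof -
  have "dyn_ball M f \<delta> x = (\<Inter>i. M \<inter> (f ^^ i) -` cball ((f ^^ i) x) \<delta>)"
    unfolding dyn_ball_def by (auto simp: dist_commute)
  also have "closed \<dots>"
    using assms by (intro closed_INT ballI continuous_closed_preimage continuous_on_funpow closed_cball)
  finally show ?thesis .
qed

lemma finite_dyn_ball_cover:
  fixes f :: "'a::metric_space \<Rightarrow> 'a"
  assumes "compact M" and "continuous_on M f" and "f ` M \<subseteq> M" and "J \<subseteq> M" and "\<delta> > 0"
    and close: "\<And>n y z. n \<ge> N \<Longrightarrow> y \<in> J \<Longrightarrow> z \<in> J \<Longrightarrow> dist ((f ^^ n) y) ((f ^^ n) z) \<le> \<delta>"
  obtains K where "K \<subseteq> J" "finite K" "J \<subseteq> (\<Union>x\<in>K. dyn_ball M f \<delta> x)"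
proof -
  obtain \<epsilon> where \<epsilon>: "\<epsilon> > 0"
    "\<forall>i<N. \<forall>y\<in>M. \<forall>z\<in>M. dist y z < \<epsilon> \<longrightarrow> dist ((f ^^ i) y) ((f ^^ i) z) \<le> \<delta>"
    using funpow_uniformly_close[OF assms(1-3,5)] by blast
  have "compact (closure J)"
    using assms(1,4)
    by (metis closed_closure closure_minimal compact_imp_closed compact_Int_closed inf.absorb2)
  moreover have "closure J \<subseteq> (\<Union>x\<in>J. ball x \<epsilon>)"
  proof
    fix z assume "z \<in> closure J"
    then obtain x where "x \<in> J" "dist x z < \<epsilon>"
      using closure_approachable \<open>\<epsilon> > 0\<close> by blast
    then show "z \<in> (\<Union>x\<in>J. ball x \<epsilon>)" by auto
  qed
  ultimately obtain K where K: "K \<subseteq> J" "finite K" "closure J \<subseteq> (\<Union>x\<in>K. ball x \<epsilon>)"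
    using compactE_image[of "closure J" J "\<lambda>x. ball x \<epsilon>"] by blast
  have "J \<subseteq> (\<Union>x\<in>K. dyn_ball M f \<delta> x)"
  proof
    fix y assume "y \<in> J"
    then have "y \<in> closure J"
      using closure_subset by blast
    then obtain x where x: "x \<in> K" "dist x y < \<epsilon>"
      using K(3) by (auto simp: mem_ball)
    have "dist ((f ^^ i) y) ((f ^^ i) x) \<le> \<delta>" for i
    proof (cases "i < N")
      case True
      then show ?thesis
        using \<epsilon>(2) x K(1) \<open>y \<in> J\<close> assms(4) by (metis dist_commute subsetD)
    next
      case False
      then show ?thesis
        using close x K(1) \<open>y \<in> J\<close> by auto
    qed
    then show "y \<in> (\<Union>x\<in>K. dyn_ball M f \<delta> x)"
      using x \<open>y \<in> J\<close> assms(4) unfolding dyn_ball_def by auto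
  qed
  with K(1,2) show thesis ..
qed

lemma expansive_measure_null_if_eventually_close:
  fixes f :: "'a::metric_space \<Rightarrow> 'a"
  assumes "compact M" and "continuous_on M f" and "f ` M \<subseteq> M" and "J \<subseteq> M"
    and sets: "sets \<mu> = sets (restrict_space borel M)"
    and "expansive_measure M f \<mu>"
    and close: "\<And>\<delta>. \<delta> > 0 \<Longrightarrow>
      \<exists>N. \<forall>n\<ge>N. \<forall>y\<in>J. \<forall>z\<in>J. dist ((f ^^ n) y) ((f ^^ n) z) \<le> \<delta>"
  shows "emeasure \<mu> J = 0"
proof -
  obtain \<delta> where "\<delta> > 0" and null: "\<And>x. x \<in> M \<Longrightarrow> emeasure \<mu> (dyn_ball M f \<delta> x) = 0"
    using \<open>expansive_measure M f \<mu>\<close> unfolding expansive_measure_def by blast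
  obtain N where N: "\<And>n y z. n \<ge> N \<Longrightarrow> y \<in> J \<Longrightarrow> z \<in> J \<Longrightarrow>
      dist ((f ^^ n) y) ((f ^^ n) z) \<le> \<delta>"
    using close[OF \<open>\<delta> > 0\<close>] by blast
  obtain K where K: "K \<subseteq> J" "finite K" "J \<subseteq> (\<Union>x\<in>K. dyn_ball M f \<delta> x)"
    by (rule finite_dyn_ball_cover[OF assms(1-4) \<open>\<delta> > 0\<close> N])
  have "closed M"
    using \<open>compact M\<close> by (rule compact_imp_closed)
  have balls: "dyn_ball M f \<delta> x \<in> sets \<mu>" for x
  proof -
    have "dyn_ball M f \<delta> x \<subseteq> M"
      unfolding dyn_ball_def by blast
    moreover have "dyn_ball M f \<delta> x \<in> sets borel"
      using closed_dyn_ball[OF \<open>closed M\<close> assms(2,3)] by (rule borel_closed)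
    ultimately show ?thesis
      using \<open>closed M\<close> by (simp add: sets sets_restrict_space_iff)
  qed
  have "emeasure \<mu> J \<le> emeasure \<mu> (\<Union>x\<in>K. dyn_ball M f \<delta> x)"
    using K(2,3) balls by (intro emeasure_mono sets.finite_UN) auto
  also have "\<dots> \<le> (\<Sum>x\<in>K. emeasure \<mu> (dyn_ball M f \<delta> x))"
    using K(2) balls by (intro emeasure_subadditive_finite) auto
  also have "\<dots> = 0"
    using null K(1) assms(4) by (auto intro: sum.neutral)
  finally show ?thesis by simp
qed

definition connected_net :: "'a::metric_space set \<Rightarrow> real \<Rightarrow> 'a set \<Rightarrow> bool" where
  "connected_net M \<delta> G \<longleftrightarrow> finite G \<and>
     (\<forall>C. C \<subseteq> M \<longrightarrow> connected C \<longrightarrow> (\<exists>y\<in>C. \<exists>z\<in>C. \<delta> < dist y z) \<longrightarrow> C \<inter> G \<noteq> {})"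

lemma connected_netD:
  assumes "connected_net M \<delta> G" and "C \<subseteq> M" and "connected C"
    and "y \<in> C" and "z \<in> C" and "\<delta> < dist y z"
  shows "C \<inter> G \<noteq> {}"
  using assms unfolding connected_net_def by blast

lemma disjoint_iterates_eventually_small:
  fixes f :: "'a::metric_space \<Rightarrow> 'a"
  assumes "continuous_on M f" and "f ` M \<subseteq> M" and "J \<subseteq> M" and "connected J"
    and disjoint: "\<forall>n m. n \<noteq> m \<longrightarrow> (f ^^ n) ` J \<inter> (f ^^ m) ` J = {}"
    and net: "connected_net M \<delta> G"
  shows "\<exists>N. \<forall>n\<ge>N. \<forall>y\<in>J. \<forall>z\<in>J. dist ((f ^^ n) y) ((f ^^ n) z) \<le> \<delta>"
proof -
  define B where "B = {n. \<exists>y\<in>J. \<exists>z\<in>J. \<delta> < dist ((f ^^ n) y) ((f ^^ n) z)}"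
  have "\<forall>n\<in>B. \<exists>x. x \<in> (f ^^ n) ` J \<inter> G"
  proof
    fix n assume "n \<in> B"
    have "(f ^^ n) ` J \<subseteq> M"
      by (rule order_trans[OF image_mono[OF assms(3)] funpow_image_subset[OF assms(2)]])
    moreover have "connected ((f ^^ n) ` J)"
      using connected_continuous_image[OF
          continuous_on_subset[OF continuous_on_funpow[OF assms(1,2)] assms(3)] assms(4)] .
    moreover obtain y z where "y \<in> J" "z \<in> J" "\<delta> < dist ((f ^^ n) y) ((f ^^ n) z)"
      using \<open>n \<in> B\<close> unfolding B_def by blast
    ultimately show "\<exists>x. x \<in> (f ^^ n) ` J \<inter> G"
      using connected_netD[OF net] by blast
  qed
  from bchoice[OF this] obtain g where g: "\<forall>n\<in>B. g n \<in> (f ^^ n) ` J \<inter> G" ..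
  have "inj_on g B"
    using disjoint g by (intro inj_onI) (metis IntD1 disjoint_iff)
  moreover have "g ` B \<subseteq> G" and "finite G"
    using g net unfolding connected_net_def by auto
  ultimately have "finite B"
    by (meson finite_imageD finite_subset)
  then obtain N where N: "B \<subseteq> {..<N}"
    using finite_nat_bounded by blast
  have "dist ((f ^^ n) y) ((f ^^ n) z) \<le> \<delta>" if "n \<ge> N" "y \<in> J" "z \<in> J" for n y z
  proof -
    have "n \<notin> B"
      using N that(1) by auto
    then show ?thesis
      using that(2,3) unfolding B_def by (auto simp: not_less)
  qed
  then show ?thesis
    by blast
qed

lemma connected_net_Icc:
  fixes a b \<delta> :: real
  assumes "\<delta> > 0"
  shows "\<exists>G. connected_net {a..b} \<delta> G"
proof -
  define G where "G = (\<lambda>k. a + real k * \<delta> / 2) ` {..nat \<lceil>2 * (b - a) / \<delta>\<rceil>}"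
  have "C \<inter> G \<noteq> {}"
    if C: "C \<subseteq> {a..b}" "connected C" and yz: "y \<in> C" "z \<in> C" "\<delta> < dist y z" for C y z
  proof -
    obtain lo hi where lohi: "lo \<in> C" "hi \<in> C" "lo + \<delta> < hi"
      using yz by (cases "y \<le> z") (auto simp: dist_real_def)
    define k where "k = nat \<lceil>2 * (lo - a) / \<delta>\<rceil>"
    have "a \<le> lo" "lo \<le> b"
      using lohi C(1) by auto
    then have "real k = of_int \<lceil>2 * (lo - a) / \<delta>\<rceil>"
      using \<open>\<delta> > 0\<close> unfolding k_def by simp
    then have k: "2 * (lo - a) / \<delta> \<le> real k" "real k < 2 * (lo - a) / \<delta> + 1"
      by linarith+
    have "lo \<le> a + real k * \<delta> / 2" "a + real k * \<delta> / 2 \<le> hi"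
      using k lohi \<open>\<delta> > 0\<close> by (simp_all add: field_simps)
    then have "a + real k * \<delta> / 2 \<in> C"
      using \<open>connected C\<close> lohi unfolding connected_iff_interval by blast
    moreover have "k \<le> nat \<lceil>2 * (b - a) / \<delta>\<rceil>"
      unfolding k_def using \<open>lo \<le> b\<close> \<open>\<delta> > 0\<close>
      by (intro nat_mono ceiling_mono divide_right_mono) auto
    ultimately show ?thesis
      unfolding G_def by blast
  qed
  then have "connected_net {a..b} \<delta> G"
    unfolding connected_net_def G_def by blast
  then show ?thesis ..
qed

lemma dist_exp_i_le: "dist (exp (\<i> * of_real a)) (exp (\<i> * of_real b)) \<le> \<bar>a - b\<bar>"
proof -
  define t where "t = a - b"
  have "(norm (exp (\<i> * of_real t) - 1))\<^sup>2 = (cos t - 1)\<^sup>2 + (sin t)\<^sup>2"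
    by (simp add: exp_Euler cmod_power2 cos_of_real sin_of_real)
  also have "\<dots> = 2 - 2 * cos t"
    using sin_cos_squared_add[of t] by (simp add: power2_eq_square algebra_simps)
  also have "\<dots> = (2 * sin (t / 2))\<^sup>2"
    using cos_double_sin[of "t / 2"] by (simp add: power2_eq_square)
  also have "\<dots> \<le> t\<^sup>2"
    unfolding abs_le_square_iff[symmetric] using abs_sin_x_le_abs_x[of "t / 2"] by (simp add: abs_mult)
  finally have "norm (exp (\<i> * of_real t) - 1) \<le> \<bar>t\<bar>"
    using abs_le_square_iff[of "norm (exp (\<i> * of_real t) - 1)" t] by simp
  moreover have "exp (\<i> * of_real a) - exp (\<i> * of_real b) = exp (\<i> * of_real b) * (exp (\<i> * of_real t) - 1)"
    unfolding t_def by (simp add: algebra_simps flip: exp_add)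
  ultimately show ?thesis
    by (simp add: dist_norm norm_mult t_def)
qed

text \<open>Dividing by \<open>-p\<close> sends \<open>p\<close> to \<open>-1\<close>, onto the branch cut of \<open>Arg\<close>, so the
  chart is continuous on the rest of the circle.\<close>

lemma Arg_chart_sphere:
  fixes p :: complex
  assumes "norm p = 1"
  shows "continuous_on (sphere 0 1 - {p}) (\<lambda>z. Arg (- z / p))"
    and "z \<in> sphere 0 1 \<Longrightarrow> - p * exp (\<i> * of_real (Arg (- z / p))) = z"
proof -
  have "p \<noteq> 0"
    using assms by auto
  have "continuous (at z) (\<lambda>z. Arg (- z / p))" if z: "z \<in> sphere 0 1 - {p}" for z
  proof -
    have "- z / p \<notin> \<real>\<^sub>\<le>\<^sub>0"
    proof
      assume "- z / p \<in> \<real>\<^sub>\<le>\<^sub>0"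
      then obtain r where r: "- z / p = of_real r" "r \<le> 0"
        by (rule nonpos_Reals_cases)
      moreover have "norm (- z / p) = 1"
        using z assms by (simp add: norm_divide)
      ultimately have "- z / p = -1"
        by simp
      then show False
        using z \<open>p \<noteq> 0\<close> by (simp add: field_simps)
    qed
    then have "continuous (at (- z / p)) Arg"
      by (rule continuous_at_Arg)
    moreover have "continuous (at z) (\<lambda>z. - z / p)"
      using \<open>p \<noteq> 0\<close> by (intro continuous_intros)
    ultimately show ?thesis
      using continuous_at_compose[of z "\<lambda>z. - z / p" Arg] by (simp add: o_def)
  qed
  then show "continuous_on (sphere 0 1 - {p}) (\<lambda>z. Arg (- z / p))"
    by (simp add: continuous_at_imp_continuous_on)
  show "- p * exp (\<i> * of_real (Arg (- z / p))) = z" if "z \<in> sphere 0 1"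
  proof -
    have "norm (- z / p) = 1"
      using that assms by (simp add: norm_divide)
    then have "- z / p = exp (\<i> * of_real (Arg (- z / p)))"
      using Arg_eq[of "- z / p"] by fastforce
    moreover have "z = - p * (- z / p)"
      using \<open>p \<noteq> 0\<close> by simp
    ultimately show ?thesis
      by metis
  qed
qed

lemma borel_connected_sphere_minus_point:
  fixes C :: "complex set"
  assumes "C \<subseteq> sphere 0 1" and "connected C" and "p \<in> sphere 0 1" and "p \<notin> C"
  shows "C \<in> sets borel"
proof -
  define U where "U = sphere (0::complex) 1 - {p}"
  define \<phi> where "\<phi> z = Arg (- z / p)" for z
  have "norm p = 1"
    using assms(3) by simp
  have "C \<subseteq> U"
    using assms unfolding U_def by blast
  have \<phi>_cont: "continuous_on U \<phi>"
    using Arg_chart_sphere(1)[OF \<open>norm p = 1\<close>] unfolding U_def \<phi>_def .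
  have "is_interval (\<phi> ` C)"
    unfolding is_interval_connected_1
    by (rule connected_continuous_image[OF continuous_on_subset[OF \<phi>_cont \<open>C \<subseteq> U\<close>] assms(2)])
  then have "\<phi> ` C \<in> sets borel"
    by (rule real_interval_borel_measurable)
  then have "\<phi> -` (\<phi> ` C) \<inter> U \<in> sets (restrict_space borel U)"
    using measurable_sets[OF borel_measurable_continuous_on_restrict[OF \<phi>_cont]]
    by (simp add: space_restrict_space)
  moreover have "\<phi> -` (\<phi> ` C) \<inter> U = C"
  proof
    show "\<phi> -` (\<phi> ` C) \<inter> U \<subseteq> C"
    proof
      fix z assume "z \<in> \<phi> -` (\<phi> ` C) \<inter> U"
      then obtain c where "c \<in> C" "\<phi> z = \<phi> c" and "z \<in> sphere 0 1"
        unfolding U_def by auto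
      then show "z \<in> C"
        using Arg_chart_sphere(2)[OF \<open>norm p = 1\<close>] assms(1) unfolding \<phi>_def by (metis subsetD)
    qed
  qed (use \<open>C \<subseteq> U\<close> in blast)
  moreover have "U \<in> sets borel"
    unfolding U_def by (intro sets.Diff borel_closed closed_sphere) simp
  ultimately show ?thesis
    by (simp add: sets_restrict_space_iff)
qed

lemma connected_net_sphere:
  assumes "\<delta> > 0"
  shows "\<exists>G. connected_net (sphere (0::complex) 1) \<delta> G"
proof -
  obtain G where G: "connected_net {-pi..pi} \<delta> G"
    using connected_net_Icc[OF assms] by blast
  define \<phi> where "\<phi> z = Arg (- z)" for z :: complex
  have \<phi>_cont: "continuous_on (sphere 0 1 - {1}) \<phi>"
    and \<phi>_inv: "\<And>z. z \<in> sphere 0 1 \<Longrightarrow> - exp (\<i> * of_real (\<phi> z)) = z"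
    using Arg_chart_sphere[of 1] unfolding \<phi>_def by simp_all
  have meets: "C \<inter> insert 1 ((\<lambda>\<theta>. - exp (\<i> * of_real \<theta>)) ` G) \<noteq> {}"
    if C: "C \<subseteq> sphere 0 1" "connected C" and yz: "y \<in> C" "z \<in> C" "\<delta> < dist y z" for C y z
  proof (cases "1 \<in> C")
    case False
    then have "C \<subseteq> sphere 0 1 - {1}"
      using C(1) by blast
    then have conn: "connected (\<phi> ` C)"
      using connected_continuous_image[OF continuous_on_subset[OF \<phi>_cont] C(2)] by blast
    have range: "\<phi> ` C \<subseteq> {-pi..pi}"
    proof -
      have "-pi \<le> \<phi> c \<and> \<phi> c \<le> pi" for c
        using mpi_less_Arg[of "- c"] Arg_le_pi[of "- c"] unfolding \<phi>_def by linarith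
      then show ?thesis
        by (simp add: image_subset_iff)
    qed
    have far: "\<delta> < dist (\<phi> y) (\<phi> z)"
    proof -
      have "y \<in> sphere 0 1" "z \<in> sphere 0 1"
        using yz(1,2) C(1) by auto
      then have "dist y z = dist (- exp (\<i> * of_real (\<phi> y))) (- exp (\<i> * of_real (\<phi> z)))"
        using \<phi>_inv by simp
      also have "\<dots> \<le> dist (\<phi> y) (\<phi> z)"
        unfolding dist_minus dist_real_def by (rule dist_exp_i_le)
      finally show ?thesis
        using yz(3) by simp
    qed
    have "\<phi> ` C \<inter> G \<noteq> {}"
      by (rule connected_netD[OF G range conn imageI[OF yz(1)] imageI[OF yz(2)] far])
    then obtain c where c: "c \<in> C" "\<phi> c \<in> G"
      by blast
    then have "c = - exp (\<i> * of_real (\<phi> c))"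
      using \<phi>_inv C(1) by auto
    then have "c \<in> C \<inter> (\<lambda>\<theta>. - exp (\<i> * of_real \<theta>)) ` G"
      using c by (intro IntI image_eqI)
    then show ?thesis
      by blast
  next
    case True
    then show ?thesis
      by blast
  qed
  have "finite G"
    using G unfolding connected_net_def by simp
  then have "connected_net (sphere 0 1) \<delta> (insert 1 ((\<lambda>\<theta>. - exp (\<i> * of_real \<theta>)) ` G))"
    unfolding connected_net_def using meets by auto
  then show ?thesis ..
qed

lemma wandering_interval_null:
  fixes f :: "'a::metric_space \<Rightarrow> 'a"
  assumes "compact M" and "continuous_on M f" and "f ` M \<subseteq> M"
    and "wandering_interval M f J" and "J \<in> sets borel"
    and "borel_prob_on M \<mu>" and "expansive_measure M f \<mu>"
    and nets: "\<And>\<delta>. \<delta> > 0 \<Longrightarrow> \<exists>G. connected_net M \<delta> G"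
  shows "J \<in> sets \<mu> \<and> emeasure \<mu> J = 0"
proof
  have "J \<subseteq> M" and "connected J"
    and iterates_disjoint: "\<forall>n m. n \<noteq> m \<longrightarrow> (f ^^ n) ` J \<inter> (f ^^ m) ` J = {}"
    using assms(4) unfolding wandering_interval_def is_interval_in_def by blast+
  have sets: "sets \<mu> = sets (restrict_space borel M)"
    using assms(6) unfolding borel_prob_on_def by blast
  show "J \<in> sets \<mu>"
    using \<open>J \<subseteq> M\<close> assms(1,5)
    by (simp add: sets sets_restrict_space_iff borel_compact)
  show "emeasure \<mu> J = 0"
  proof (rule expansive_measure_null_if_eventually_close[OF assms(1-3) \<open>J \<subseteq> M\<close> sets assms(7)])
    fix \<delta> :: real
    assume "\<delta> > 0"
    then obtain G where "connected_net M \<delta> G"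
      using nets by blast
    then show "\<exists>N. \<forall>n\<ge>N. \<forall>y\<in>J. \<forall>z\<in>J. dist ((f ^^ n) y) ((f ^^ n) z) \<le> \<delta>"
      by (rule disjoint_iterates_eventually_small[OF assms(2,3) \<open>J \<subseteq> M\<close> \<open>connected J\<close> iterates_disjoint])
  qed
qed

theorem lemma4p11:
  shows "(\<forall>(f::real \<Rightarrow> real) J \<mu>.
            continuous_on {0..1} f \<and> f ` {0..1} \<subseteq> {0..1} \<and>
            wandering_interval {0..1} f J \<and>
            borel_prob_on {0..1} \<mu> \<and> expansive_measure {0..1} f \<mu>
            \<longrightarrow> J \<in> sets \<mu> \<and> emeasure \<mu> J = 0)
       \<and> (\<forall>(f::complex \<Rightarrow> complex) J \<mu>.
            continuous_on (sphere 0 1) f \<and> f ` sphere 0 1 \<subseteq> sphere 0 1 \<and>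
            wandering_interval (sphere 0 1) f J \<and>
            borel_prob_on (sphere 0 1) \<mu> \<and> expansive_measure (sphere 0 1) f \<mu>
            \<longrightarrow> J \<in> sets \<mu> \<and> emeasure \<mu> J = 0)"
proof (intro conjI; intro allI impI; elim conjE)
  fix f :: "real \<Rightarrow> real" and J \<mu>
  assume f: "continuous_on {0..1} f" "f ` {0..1} \<subseteq> {0..1}" and W: "wandering_interval {0..1} f J"
    and \<mu>: "borel_prob_on {0..1} \<mu>" "expansive_measure {0..1} f \<mu>"
  have "J \<in> sets borel"
    using W unfolding wandering_interval_def is_interval_in_def
    by (simp add: real_interval_borel_measurable is_interval_connected_1)
  then show "J \<in> sets \<mu> \<and> emeasure \<mu> J = 0"
    by (rule wandering_interval_null[OF compact_Icc f W _ \<mu> connected_net_Icc])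
next
  fix f :: "complex \<Rightarrow> complex" and J \<mu>
  assume f: "continuous_on (sphere 0 1) f" "f ` sphere 0 1 \<subseteq> sphere 0 1"
    and W: "wandering_interval (sphere 0 1) f J"
    and \<mu>: "borel_prob_on (sphere 0 1) \<mu>" "expansive_measure (sphere 0 1) f \<mu>"
  obtain x where "x \<in> J" "J \<subseteq> sphere 0 1" "connected J"
    using W unfolding wandering_interval_def is_interval_in_def by blast
  moreover have "(f ^^ 1) ` J \<inter> (f ^^ 0) ` J = {}"
    using W unfolding wandering_interval_def by blast
  then have "f x \<notin> J"
    using \<open>x \<in> J\<close> by auto
  moreover have "f x \<in> sphere 0 1"
    using f(2) \<open>x \<in> J\<close> \<open>J \<subseteq> sphere 0 1\<close> by blast
  ultimately have "J \<in> sets borel"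
    by (intro borel_connected_sphere_minus_point)
  then show "J \<in> sets \<mu> \<and> emeasure \<mu> J = 0"
    by (rule wandering_interval_null[OF compact_sphere f W _ \<mu> connected_net_sphere])
qed

end
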